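(* Let $(V,\sim)$ be a finite graph equipped with the side data $\mathrm{left}(\cdot),\mathrm{right}(\cdot)$ described in the context, and assume that $(V,\sim)$ admits a conformal model. Let $Q \subseteq V$ be a prime node of the modular decomposition tree of $(V,\sim)$, let $M_1,\ldots,M_n$ be the children of $Q$ in this tree, and let $U \subseteq Q$ be a set containing exactly one vertex from each $M_i$, $i \in \{1,\ldots,n\}$. Then the graph $(U,\sim)$, which is prime, has exactly two conformal models up to equivalence, and one of them is the reflection of the other.
   Context: Graph and side data. $(V,\sim)$ is a finite simple graph; we write $u \parallel v$ when $u \neq v$ and $u,v$ are non-adjacent, and for sets $X \sim Y$ (resp. $X \parallel Y$) means $x\sim y$ (resp. $x \parallel y$) for all $x\in X$, $y \in Y$. For every $u \in V$ we are given a partition of $\{v \in V : v \parallel u\}$ into two sets $\mathrm{left}(u)$ and $\mathrm{right}(u)$. (In the paper, $(V,\sim)$ is the overlap graph $G_{ov}$ of a circular-arc graph $G$ and these sets come from the arc model; the statement uses only the data above and the existence of a conformal model of $(V,\sim)$.) Conformal models. For $U \subseteq V$, a conformal model of $(U,\sim)$ is a circular word $\phi$ (a word considered up to cyclic rotation; two such words are equivalent if one is a rotation of the other) in which each of the letters $u^0,u^1$, $u \in U$, occurs exactly once, such that: (i) for distinct $u,v \in U$, the chords $\phi(u)$ (joining $u^0,u^1$) and $\phi(v)$ cross, i.e. the letters of $u$ and $v$ alternate in $\phi$, if and only if $u \sim v$; (ii) for $u,v \in U$ with $u \parallel v$, both letters of $v$ lie on the left side of $\phi(u)$ (i.e. among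 the letters met when reading $\phi$ cyclically forward from $u^0$ to $u^1$) if $v \in \mathrm{left}(u)$, and both lie on the right side of $\phi(u)$ (among the letters met reading forward from $u^1$ to $u^0$) if $v \in \mathrm{right}(u)$. The reflection of a circular word $\phi$ is obtained by reversing $\phi$ and exchanging $u^0$ and $u^1$ for every $u$. Modular decomposition. A module of a graph $(X,\sim)$ is a set $M \subseteq X$ such that every vertex of $X \setminus M$ is adjacent either to all or to none of the vertices of $M$; it is trivial if $|M| \le 1$ or $M = X$. A graph is prime if it has only trivial modules. A node $Q$ of the modular decomposition tree of $(V,\sim)$ is prime if its children $M_1,\ldots,M_n$ (the maximal strong modules properly contained in $Q$) are such that the quotient graph obtained from $(Q,\sim)$ by picking one vertex in each $M_i$ is prime. *)

theory Defs
  imports Main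
begin

(* Letters of a circular word: (u, False) stands for u^0, (u, True) for u^1.
   A circular word is represented by a list; two lists represent the same
   circular word iff one is a rotation of the other. *)

type_synonym 'v letter = "'v \<times> bool"

definition nonadj :: "('v \<Rightarrow> 'v \<Rightarrow> bool) \<Rightarrow> 'v \<Rightarrow> 'v \<Rightarrow> bool" where
  "nonadj adj u v \<longleftrightarrow> u \<noteq> v \<and> \<not> adj u v"

definition simple_graph :: "'v set \<Rightarrow> ('v \<Rightarrow> 'v \<Rightarrow> bool) \<Rightarrow> bool" where
  "simple_graph V adj \<longleftrightarrow> finite V \<and> (\<forall>u\<in>V. \<not> adj u u)
      \<and> (\<forall>u\<in>V. \<forall>v\<in>V. adj u v \<longleftrightarrow> adj v u)"

definition side_data :: "'v set \<Rightarrow> ('v \<Rightarrow> 'v \<Rightarrow> bool) \<Rightarrow> ('v \<Rightarrow> 'v set) \<Rightarrow> ('v \<Rightarrow> 'v set) \<Rightarrow> bool" where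
  "side_data V adj lft rgt \<longleftrightarrow> (\<forall>u\<in>V. lft u \<inter> rgt u = {}
      \<and> lft u \<union> rgt u = {v\<in>V. nonadj adj u v})"

definition left_side :: "'v letter list \<Rightarrow> 'v \<Rightarrow> 'v letter set" where
  "left_side w u = {x. \<exists>n a b. rotate n w = [(u,False)] @ a @ [(u,True)] @ b \<and> x \<in> set a}"

definition right_side :: "'v letter list \<Rightarrow> 'v \<Rightarrow> 'v letter set" where
  "right_side w u = {x. \<exists>n a b. rotate n w = [(u,False)] @ a @ [(u,True)] @ b \<and> x \<in> set b}"

definition crosses :: "'v letter list \<Rightarrow> 'v \<Rightarrow> 'v \<Rightarrow> bool" where
  "crosses w u v \<longleftrightarrow> ((v,False) \<in> left_side w u \<longleftrightarrow> (v,True) \<notin> left_side w u)"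

definition conformal_model ::
  "('v \<Rightarrow> 'v \<Rightarrow> bool) \<Rightarrow> ('v \<Rightarrow> 'v set) \<Rightarrow> ('v \<Rightarrow> 'v set) \<Rightarrow> 'v set \<Rightarrow> 'v letter list \<Rightarrow> bool" where
  "conformal_model adj lft rgt U w \<longleftrightarrow>
     distinct w \<and> set w = U \<times> UNIV
     \<and> (\<forall>u\<in>U. \<forall>v\<in>U. u \<noteq> v \<longrightarrow> (crosses w u v \<longleftrightarrow> adj u v))
     \<and> (\<forall>u\<in>U. \<forall>v\<in>U. nonadj adj u v \<longrightarrow>
          (v \<in> lft u \<longrightarrow> {(v,False),(v,True)} \<subseteq> left_side w u)
        \<and> (v \<in> rgt u \<longrightarrow> {(v,False),(v,True)} \<subseteq> right_side w u))"

definition cw_equiv :: "'a list \<Rightarrow> 'a list \<Rightarrow> bool" where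
  "cw_equiv w w' \<longleftrightarrow> (\<exists>n. rotate n w = w')"

definition reflect :: "'v letter list \<Rightarrow> 'v letter list" where
  "reflect w = map (\<lambda>(u,b). (u, \<not> b)) (rev w)"

definition is_module :: "('v \<Rightarrow> 'v \<Rightarrow> bool) \<Rightarrow> 'v set \<Rightarrow> 'v set \<Rightarrow> bool" where
  "is_module adj X M \<longleftrightarrow> M \<subseteq> X \<and>
     (\<forall>x\<in>X - M. (\<forall>m\<in>M. adj x m) \<or> (\<forall>m\<in>M. \<not> adj x m))"

definition prime_graph :: "('v \<Rightarrow> 'v \<Rightarrow> bool) \<Rightarrow> 'v set \<Rightarrow> bool" where
  "prime_graph adj X \<longleftrightarrow> (\<forall>M. is_module adj X M \<longrightarrow> card M \<le> 1 \<or> M = X)"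

(* strong modules = nodes of the modular decomposition tree *)
definition strong_module :: "('v \<Rightarrow> 'v \<Rightarrow> bool) \<Rightarrow> 'v set \<Rightarrow> 'v set \<Rightarrow> bool" where
  "strong_module adj V M \<longleftrightarrow> is_module adj V M \<and> M \<noteq> {} \<and>
     (\<forall>M'. is_module adj V M' \<longrightarrow> M \<inter> M' = {} \<or> M \<subseteq> M' \<or> M' \<subseteq> M)"

definition md_child :: "('v \<Rightarrow> 'v \<Rightarrow> bool) \<Rightarrow> 'v set \<Rightarrow> 'v set \<Rightarrow> 'v set \<Rightarrow> bool" where
  "md_child adj V Q M \<longleftrightarrow> strong_module adj V M \<and> M \<subset> Q \<and>
     \<not> (\<exists>M'. strong_module adj V M' \<and> M \<subset> M' \<and> M' \<subset> Q)"

definition representatives :: "('v \<Rightarrow> 'v \<Rightarrow> bool) \<Rightarrow> 'v set \<Rightarrow> 'v set \<Rightarrow> 'v set \<Rightarrow> bool" where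
  "representatives adj V Q U \<longleftrightarrow> U \<subseteq> Q \<and>
     (\<forall>M. md_child adj V Q M \<longrightarrow> card (U \<inter> M) = 1)"

(* prime node: an internal node with at least three children (i.e. not a leaf
   and not a two-child series/parallel node) whose quotient graph is prime *)
definition prime_node :: "('v \<Rightarrow> 'v \<Rightarrow> bool) \<Rightarrow> 'v set \<Rightarrow> 'v set \<Rightarrow> bool" where
  "prime_node adj V Q \<longleftrightarrow> strong_module adj V Q \<and>
     card {M. md_child adj V Q M} \<ge> 3 \<and>
     (\<forall>U. representatives adj V Q U \<longrightarrow> prime_graph adj U)"

end

theory Submission
  imports Defs
begin

text \<open>A conformal model is determined up to rotation by the cyclic order of its letters, and when
  the graph is connected this order is determined by the sides: for each chord \<open>u\<close> and each
  letter \<open>y\<close> of another chord, whether \<open>y\<close> lies on the left of \<open>u\<close>. For non-neighbours the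
  side is prescribed by \<open>lft\<close>; for an edge \<open>uv\<close> the two ends of \<open>v\<close> lie on opposite sides of \<open>u\<close>,
  so one bit per edge remains free. For two models the set of edges on which these bits differ
  is symmetric and, by a configuration argument on three chords, closed under Gallai's
  relation \<open>\<Gamma>\<close> (\<open>uv \<Gamma> uw\<close> when \<open>v\<close> and \<open>w\<close> are not adjacent). In a prime graph the only
  \<open>\<Gamma>\<close>-closed sets of edges are the empty set and the set of all edges; these give equivalence to
  the first model and to its reflection. A model of \<open>U\<close> is obtained by restricting a model of \<open>V\<close>,
  and it is not equivalent to its reflection because \<open>U\<close> has an edge.\<close>

section \<open>Positions of entries in a list\<close>

primrec idx :: "'a list \<Rightarrow> 'a \<Rightarrow> nat" where
  "idx [] x = 0"
| "idx (y # ys) x = (if y = x then 0 else Suc (idx ys x))"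

lemma idx_less: "x \<in> set w \<Longrightarrow> idx w x < length w"
  by (induction w) auto

lemma nth_idx: "x \<in> set w \<Longrightarrow> w ! idx w x = x"
  by (induction w) auto

lemma idx_nth: "distinct w \<Longrightarrow> i < length w \<Longrightarrow> idx w (w ! i) = i"
proof (induction w arbitrary: i)
  case (Cons y ys)
  then show ?case by (cases i) (auto simp: nth_mem)
qed simp

lemma idx_append: "idx (xs @ ys) x = (if x \<in> set xs then idx xs x else length xs + idx ys x)"
  by (induction xs) auto

lemma idx_rev:
  assumes "distinct w" "x \<in> set w"
  shows "idx (rev w) x = length w - 1 - idx w x"
proof -
  have "idx w x < length w" using assms(2) by (rule idx_less)
  then have "rev w ! (length w - 1 - idx w x) = x"
    using nth_idx[OF assms(2)] by (simp add: rev_nth Suc_diff_Suc)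
  then show ?thesis
    using idx_nth[of "rev w" "length w - 1 - idx w x"] assms \<open>idx w x < length w\<close> by simp
qed

lemma idx_map_inj: "inj f \<Longrightarrow> idx (map f xs) (f x) = idx xs x"
  by (induction xs) (auto dest: injD)

lemma idx_filter_less_iff:
  assumes "distinct w" "x \<in> set (filter P w)" "y \<in> set (filter P w)"
  shows "idx (filter P w) x < idx (filter P w) y \<longleftrightarrow> idx w x < idx w y"
  using assms by (induction w) (auto split: if_splits)

lemma card_idx_less:
  assumes "distinct w" "x \<in> set w"
  shows "card {y \<in> set w. idx w y < idx w x} = idx w x"
proof -
  have "{y \<in> set w. idx w y < idx w x} = (!) w ` {..<idx w x}"
  proof
    show "{y \<in> set w. idx w y < idx w x} \<subseteq> (!) w ` {..<idx w x}"
      using nth_idx by (force simp: image_iff)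
    show "(!) w ` {..<idx w x} \<subseteq> {y \<in> set w. idx w y < idx w x}"
      using idx_less[OF assms(2)] idx_nth[OF assms(1)] by auto
  qed
  moreover have "inj_on ((!) w) {..<idx w x}"
    using idx_less[OF assms(2)] assms(1) by (auto simp: inj_on_def nth_eq_iff_index_eq)
  ultimately show ?thesis by (simp add: card_image)
qed

lemma list_eq_if_same_order:
  assumes "distinct xs" "distinct ys" "set xs = set ys"
    and "\<And>x y. x \<in> set xs \<Longrightarrow> y \<in> set xs \<Longrightarrow> idx xs x < idx xs y \<longleftrightarrow> idx ys x < idx ys y"
  shows "xs = ys"
proof -
  have same_idx: "idx xs x = idx ys x" if "x \<in> set xs" for x
  proof -
    have "{y \<in> set xs. idx xs y < idx xs x} = {y \<in> set ys. idx ys y < idx ys x}"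
      using assms(3,4) that by auto
    then show ?thesis
      using card_idx_less[OF assms(1) that] card_idx_less[OF assms(2)] that assms(3) by metis
  qed
  show ?thesis
  proof (rule nth_equalityI)
    show "length xs = length ys" using assms(1-3) by (metis distinct_card)
    fix i assume "i < length xs"
    then have "xs ! i \<in> set xs" "idx ys (xs ! i) = i" using idx_nth[OF assms(1)] same_idx by auto
    then show "xs ! i = ys ! i" using nth_idx[of "xs ! i" ys] assms(3) by metis
  qed
qed

lemma inj_on_idx: "inj_on (idx w) (set w)"
  by (metis inj_onI nth_idx)

lemma distinct_map_idx: "distinct xs \<Longrightarrow> set xs \<subseteq> set w \<Longrightarrow> distinct (map (idx w) xs)"
  by (simp add: distinct_map inj_on_subset[OF inj_on_idx])

lemma rotate_to_front:
  assumes "x \<in> set w"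
  shows "\<exists>t. rotate (idx w x) w = x # t"
proof -
  have "idx w x < length w" using assms by (rule idx_less)
  then have "rotate (idx w x) w = (w ! idx w x # drop (Suc (idx w x)) w) @ take (idx w x) w"
    by (simp add: rotate_drop_take Cons_nth_drop_Suc)
  then show ?thesis using nth_idx[OF assms] by auto
qed

lemma rotate_append_swap: "rotate n w = xs @ ys \<Longrightarrow> rotate (length xs + n) w = ys @ xs"
  by (metis rotate_append rotate_rotate)

section \<open>Cyclic order of the entries of a list\<close>

definition cyclic3 :: "'a::linorder \<Rightarrow> 'a \<Rightarrow> 'a \<Rightarrow> bool" where
  "cyclic3 i j k \<longleftrightarrow> (i < j \<and> j < k) \<or> (j < k \<and> k < i) \<or> (k < i \<and> i < j)"

definition cyclic :: "'a list \<Rightarrow> 'a \<Rightarrow> 'a \<Rightarrow> 'a \<Rightarrow> bool" where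
  "cyclic w a b c \<longleftrightarrow> cyclic3 (idx w a) (idx w b) (idx w c)"

lemmas cyclic3_unfold = cyclic3_def distinct.simps list.set insert_iff empty_iff

lemma cyclic3_rotate: "cyclic3 i j k \<longleftrightarrow> cyclic3 j k i"
  unfolding cyclic3_def by blast

lemma cyclic3_degenerate: "\<not> cyclic3 i i k" "\<not> cyclic3 i k k" "\<not> cyclic3 k i k"
  unfolding cyclic3_def by auto

lemma cyclic3_cong:
  "(i < j \<longleftrightarrow> i' < j') \<Longrightarrow> (j < k \<longleftrightarrow> j' < k') \<Longrightarrow> (k < i \<longleftrightarrow> k' < i')
    \<Longrightarrow> cyclic3 i j k \<longleftrightarrow> cyclic3 i' j' k'"
  unfolding cyclic3_def by simp

lemma cyclic3_reverse:
  "(i' < j' \<longleftrightarrow> j < i) \<Longrightarrow> (j' < k' \<longleftrightarrow> k < j) \<Longrightarrow> (k' < i' \<longleftrightarrow> i < k)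
    \<Longrightarrow> cyclic3 i' j' k' \<longleftrightarrow> cyclic3 k j i"
  unfolding cyclic3_def by blast

lemma cyclic3_pred:
  fixes i j k n :: nat
  assumes "i \<le> n" "j \<le> n" "k \<le> n"
  shows "cyclic3 (if i = 0 then n else i - 1) (if j = 0 then n else j - 1)
      (if k = 0 then n else k - 1) \<longleftrightarrow> cyclic3 i j k"
  using assms unfolding cyclic3_def by auto

lemma cyclic3_swap: "distinct [i, j, k] \<Longrightarrow> cyclic3 i k j \<longleftrightarrow> \<not> cyclic3 i j k"
  unfolding cyclic3_unfold by (smt (verit) order.strict_trans not_less_iff_gr_or_eq)

lemma cyclic3_split:
  assumes "distinct [x, a, b, c]"
  shows "cyclic3 a b c \<longleftrightarrow>
    (cyclic3 x a b \<and> cyclic3 x b c) \<or> (cyclic3 x b c \<and> cyclic3 x c a)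
      \<or> (cyclic3 x c a \<and> cyclic3 x a b)"
  using assms unfolding cyclic3_unfold by (smt (verit) order.strict_trans not_less_iff_gr_or_eq)

text \<open>In the following configurations \<open>u0\<close>, \<open>u1\<close> (and \<open>v0\<close>, \<open>v1\<close>, \<open>w0\<close>, \<open>w1\<close>) are the ends of a
  chord, and \<open>cyclic3 u0 y u1\<close> says that \<open>y\<close> lies on the left of it.\<close>

lemma cyclic3_opposite_sides:
  assumes "distinct [u0, u1, y, z]" "cyclic3 u0 y u1" "\<not> cyclic3 u0 z u1"
  shows "cyclic3 u0 y z \<and> cyclic3 u1 z y"
  using assms unfolding cyclic3_unfold by (smt (verit) order.strict_trans not_less_iff_gr_or_eq)

lemma cyclic3_crossing:
  assumes "distinct [u0, u1, v0, v1]" "cyclic3 u0 v0 u1 \<noteq> cyclic3 u0 v1 u1"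
  shows "(cyclic3 v0 u0 v1 \<longleftrightarrow> \<not> cyclic3 u0 v0 u1) \<and> (cyclic3 v0 u1 v1 \<longleftrightarrow> cyclic3 u0 v0 u1)"
  using assms unfolding cyclic3_unfold by (smt (verit) order.strict_trans not_less_iff_gr_or_eq)

lemma cyclic3_noncrossing:
  assumes "distinct [v0, v1, w0, w1, y]"
    and "cyclic3 v0 w0 v1 = cyclic3 v0 w1 v1" "cyclic3 w0 v0 w1 = cyclic3 w0 v1 w1"
    and "cyclic3 v0 y v1 \<noteq> cyclic3 v0 w0 v1"
  shows "cyclic3 w0 y w1 = cyclic3 w0 v0 w1"
  using assms unfolding cyclic3_unfold by (smt (verit) order.strict_trans not_less_iff_gr_or_eq)

lemma cyclic3_crossing_two:
  assumes "distinct [u0, u1, v0, v1, w0, w1]"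
    and "cyclic3 u0 v0 u1 \<noteq> cyclic3 u0 v1 u1" "cyclic3 u0 w0 u1 \<noteq> cyclic3 u0 w1 u1"
    and "cyclic3 v0 w0 v1 = cyclic3 v0 w1 v1" "cyclic3 w0 v0 w1 = cyclic3 w0 v1 w1"
  shows "cyclic3 u0 v0 u1 = cyclic3 u0 w0 u1 \<longleftrightarrow> cyclic3 v0 w0 v1 \<noteq> cyclic3 w0 v0 w1"
proof -
  have "distinct [u0, u1, v0, v1]" "distinct [u0, u1, w0, w1]"
    "distinct [v0, v1, w0, w1, u0]" "distinct [v0, v1, w0, w1, u1]"
    using assms(1) by auto
  then show ?thesis
    using cyclic3_crossing cyclic3_noncrossing assms(2-5) by metis
qed

lemma cyclic_rotate_args: "cyclic w a b c \<longleftrightarrow> cyclic w b c a"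
  unfolding cyclic_def by (rule cyclic3_rotate)

lemma cyclic_degenerate: "\<not> cyclic w a a c" "\<not> cyclic w a c c" "\<not> cyclic w c a c"
  unfolding cyclic_def by (auto simp: cyclic3_degenerate)

lemma cyclic_swap:
  assumes "distinct [a, b, c]" "{a, b, c} \<subseteq> set w"
  shows "cyclic w a c b \<longleftrightarrow> \<not> cyclic w a b c"
  using cyclic3_swap distinct_map_idx[of "[a, b, c]" w] assms unfolding cyclic_def by simp

lemma cyclic_split:
  assumes "distinct [x, a, b, c]" "{x, a, b, c} \<subseteq> set w"
  shows "cyclic w a b c \<longleftrightarrow>
    (cyclic w x a b \<and> cyclic w x b c) \<or> (cyclic w x b c \<and> cyclic w x c a)
      \<or> (cyclic w x c a \<and> cyclic w x a b)"
  using cyclic3_split distinct_map_idx[of "[x, a, b, c]" w] assms unfolding cyclic_def by simp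

lemma idx_rotate1:
  assumes "distinct (h # t)" "y \<in> set (h # t)"
  shows "idx (rotate1 (h # t)) y = (if idx (h # t) y = 0 then length t else idx (h # t) y - 1)"
  using assms by (auto simp: idx_append)

lemma cyclic_rotate1:
  assumes "distinct w" "{a, b, c} \<subseteq> set w"
  shows "cyclic (rotate1 w) a b c \<longleftrightarrow> cyclic w a b c"
proof (cases w)
  case (Cons h t)
  have shift: "idx (rotate1 w) y = (if idx w y = 0 then length t else idx w y - 1)"
    if "y \<in> set w" for y
    using idx_rotate1[of h t y] assms(1) that Cons by simp
  have bound: "idx w y \<le> length t" if "y \<in> set w" for y
    using idx_less[OF that] Cons by simp
  have abc: "a \<in> set w" "b \<in> set w" "c \<in> set w" using assms(2) by auto
  show ?thesis
    unfolding cyclic_def shift[OF abc(1)] shift[OF abc(2)] shift[OF abc(3)]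
    by (rule cyclic3_pred) (use bound abc in auto)
qed simp

lemma cyclic_rotate:
  assumes "distinct w" "{a, b, c} \<subseteq> set w"
  shows "cyclic (rotate n w) a b c \<longleftrightarrow> cyclic w a b c"
  by (induction n) (use assms cyclic_rotate1[of "rotate _ w"] in auto)

lemma cyclic_filter:
  assumes "distinct w" "{a, b, c} \<subseteq> set (filter P w)"
  shows "cyclic (filter P w) a b c \<longleftrightarrow> cyclic w a b c"
  unfolding cyclic_def
  by (rule cyclic3_cong) (use idx_filter_less_iff[OF assms(1)] assms(2) in auto)

lemma cyclic_Cons_iff:
  "a \<notin> set t \<Longrightarrow> b \<in> set t \<Longrightarrow> c \<in> set t \<Longrightarrow> cyclic (a # t) a b c \<longleftrightarrow> idx t b < idx t c"
  unfolding cyclic_def cyclic3_def by auto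

lemma rotation_if_same_cyclic:
  assumes "distinct p" "distinct q" "set p = set q"
    and "\<And>a b c. a \<in> set p \<Longrightarrow> b \<in> set p \<Longrightarrow> c \<in> set p \<Longrightarrow> cyclic p a b c \<longleftrightarrow> cyclic q a b c"
  shows "\<exists>n. rotate n q = p"
proof (cases p)
  case Nil
  then show ?thesis using assms(3) by simp
next
  case (Cons a t)
  then obtain t' where t': "rotate (idx q a) q = a # t'"
    using rotate_to_front assms(3) by fastforce
  have "distinct (a # t')" "set (a # t') = set p"
    using assms(2,3) arg_cong[OF t', of distinct] arg_cong[OF t', of set] by auto
  then have dist: "distinct t" "distinct t'" "a \<notin> set t" "a \<notin> set t'" and set_eq: "set t = set t'"
    using assms(1) Cons by auto
  have "t = t'"
  proof (rule list_eq_if_same_order[OF dist(1,2) set_eq])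
    fix b c assume bc: "b \<in> set t" "c \<in> set t"
    have "cyclic (a # t) a b c \<longleftrightarrow> cyclic (a # t') a b c"
      using assms(4)[of a b c] cyclic_rotate[OF assms(2), of a b c "idx q a"] assms(3) bc Cons t'
      by auto
    then show "idx t b < idx t c \<longleftrightarrow> idx t' b < idx t' c"
      using cyclic_Cons_iff dist(3,4) bc set_eq by metis
  qed
  then show ?thesis using t' Cons by blast
qed

definition flip :: "'v letter \<Rightarrow> 'v letter" where
  "flip = (\<lambda>(u, b). (u, \<not> b))"

lemma flip_simp [simp]: "flip (u, b) = (u, \<not> b)"
  by (simp add: flip_def)

lemma flip_flip [simp]: "flip (flip x) = x"
  by (cases x) simp

lemma inj_flip: "inj flip"
  by (metis injI flip_flip)

lemma reflect_eq_map_flip: "reflect w = map flip (rev w)"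
  unfolding reflect_def flip_def ..

lemma distinct_reflect: "distinct w \<Longrightarrow> distinct (reflect w)"
  by (simp add: reflect_eq_map_flip distinct_map inj_on_subset[OF inj_flip])

lemma set_reflect: "set (reflect w) = flip ` set w"
  by (simp add: reflect_eq_map_flip)

lemma cyclic_reflect:
  assumes "distinct w" "{flip a, flip b, flip c} \<subseteq> set w"
  shows "cyclic (reflect w) a b c \<longleftrightarrow> cyclic w (flip c) (flip b) (flip a)"
proof -
  have idx_reflect: "idx (reflect w) x = length w - 1 - idx w (flip x)" if "flip x \<in> set w" for x
    using idx_map_inj[OF inj_flip, of "rev w" "flip x"] idx_rev[OF assms(1) that]
    by (simp add: reflect_eq_map_flip)
  have "idx w (flip a) < length w" "idx w (flip b) < length w" "idx w (flip c) < length w"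
    using assms(2) idx_less by auto
  then show ?thesis
    unfolding cyclic_def using assms(2) by (simp add: idx_reflect) (rule cyclic3_reverse; linarith)
qed

section \<open>Conformal models through the cyclic order\<close>

lemma arc_iff_cyclic:
  assumes "distinct w" "{p, q} \<subseteq> set w" "p \<noteq> q"
  shows "(\<exists>n a b. rotate n w = [p] @ a @ [q] @ b \<and> x \<in> set a) \<longleftrightarrow> x \<in> set w \<and> cyclic w p x q"
proof
  assume "\<exists>n a b. rotate n w = [p] @ a @ [q] @ b \<and> x \<in> set a"
  then obtain n a b where r: "rotate n w = p # a @ q # b" and x: "x \<in> set a" by auto
  have "distinct (p # a @ q # b)" using assms(1) r by (metis distinct_rotate)
  then have "cyclic (rotate n w) p x q"
    unfolding r cyclic_def cyclic3_def using x idx_less[OF x] by (auto simp: idx_append)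
  moreover have "x \<in> set w" using x arg_cong[OF r, of set] by simp
  ultimately show "x \<in> set w \<and> cyclic w p x q" using cyclic_rotate[of w p x q n] assms by auto
next
  assume x: "x \<in> set w \<and> cyclic w p x q"
  obtain t where r: "rotate (idx w p) w = p # t" using rotate_to_front[of p w] assms(2) by auto
  have dt: "distinct (p # t)" and st: "set (p # t) = set w"
    using arg_cong[OF r, of distinct] arg_cong[OF r, of set] assms(1)
    by (simp_all only: distinct_rotate set_rotate)
  have "x \<noteq> p" using x cyclic_degenerate(1)[of w p q] by blast
  then have xq: "x \<in> set t" "q \<in> set t" using x st[symmetric] assms(2,3) by auto
  have "cyclic (p # t) p x q" using cyclic_rotate[of w p x q "idx w p"] x assms(1,2) r by simp
  then have "idx t x < idx t q" using cyclic_Cons_iff[of p t x q] dt xq by simp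
  then have "x \<in> set (take (idx t q) t)"
    using nth_mem[of "idx t x" "take (idx t q) t"] nth_idx[OF xq(1)] idx_less[OF xq(1)] by simp
  moreover have "take (idx t q) t @ q # drop (Suc (idx t q)) t = t"
    using id_take_nth_drop[OF idx_less[OF xq(2)]] nth_idx[OF xq(2)] by simp
  ultimately show "\<exists>n a b. rotate n w = [p] @ a @ [q] @ b \<and> x \<in> set a"
    using r by (intro exI[of _ "idx w p"] exI[of _ "take (idx t q) t"]
        exI[of _ "drop (Suc (idx t q)) t"]) simp
qed

definition on_left :: "'v letter list \<Rightarrow> 'v \<Rightarrow> 'v letter \<Rightarrow> bool" where
  "on_left w u y \<longleftrightarrow> cyclic w (u, False) y (u, True)"

lemma left_side_iff:
  assumes "distinct w" "{(u, False), (u, True)} \<subseteq> set w"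
  shows "x \<in> left_side w u \<longleftrightarrow> x \<in> set w \<and> on_left w u x"
  unfolding left_side_def on_left_def using arc_iff_cyclic[OF assms] by simp

lemma arc_swap:
  "(\<exists>n a b. rotate n w = [p] @ a @ [q] @ b \<and> x \<in> set b)
    \<longleftrightarrow> (\<exists>n a b. rotate n w = [q] @ a @ [p] @ b \<and> x \<in> set a)"
proof
  assume "\<exists>n a b. rotate n w = [p] @ a @ [q] @ b \<and> x \<in> set b"
  then obtain n a b where "rotate n w = (p # a) @ (q # b)" and x: "x \<in> set b" by auto
  then have "rotate (length (p # a) + n) w = [q] @ b @ [p] @ a"
    by (simp only: rotate_append_swap append_Cons append_Nil)
  then show "\<exists>n a b. rotate n w = [q] @ a @ [p] @ b \<and> x \<in> set a" using x by blast
next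
  assume "\<exists>n a b. rotate n w = [q] @ a @ [p] @ b \<and> x \<in> set a"
  then obtain n a b where "rotate n w = (q # a) @ (p # b)" and x: "x \<in> set a" by auto
  then have "rotate (length (q # a) + n) w = [p] @ b @ [q] @ a"
    by (simp only: rotate_append_swap append_Cons append_Nil)
  then show "\<exists>n a b. rotate n w = [p] @ a @ [q] @ b \<and> x \<in> set b" using x by blast
qed

lemma right_side_iff:
  assumes "distinct w" "{(u, False), (u, True)} \<subseteq> set w" "fst x \<noteq> u"
  shows "x \<in> right_side w u \<longleftrightarrow> x \<in> set w \<and> \<not> on_left w u x"
proof -
  have "x \<in> right_side w u \<longleftrightarrow> x \<in> set w \<and> cyclic w (u, True) x (u, False)"
    unfolding right_side_def mem_Collect_eq arc_swap by (rule arc_iff_cyclic) (use assms in auto)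
  also have "\<dots> \<longleftrightarrow> x \<in> set w \<and> cyclic w (u, False) (u, True) x"
    using cyclic_rotate_args[of w "(u, True)" x "(u, False)"]
      cyclic_rotate_args[of w x "(u, False)"]
    by simp
  also have "\<dots> \<longleftrightarrow> x \<in> set w \<and> \<not> on_left w u x"
    using cyclic_swap[of "(u, False)" "(u, True)" x w] assms unfolding on_left_def by (cases x) auto
  finally show ?thesis .
qed

lemma crosses_iff:
  assumes "distinct w" "{(u, False), (u, True), (v, False), (v, True)} \<subseteq> set w"
  shows "crosses w u v \<longleftrightarrow> on_left w u (v, False) \<noteq> on_left w u (v, True)"
  unfolding crosses_def using left_side_iff[of w u] assms by auto

text \<open>Only \<open>lft\<close> appears: by the side data, \<open>rgt u\<close> is the complement of \<open>lft u\<close> among the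
  non-neighbours of \<open>u\<close>.\<close>

definition chord_model ::
  "('v \<Rightarrow> 'v \<Rightarrow> bool) \<Rightarrow> ('v \<Rightarrow> 'v set) \<Rightarrow> 'v set \<Rightarrow> 'v letter list \<Rightarrow> bool" where
  "chord_model adj lft U w \<longleftrightarrow> distinct w \<and> set w = U \<times> UNIV
     \<and> (\<forall>u\<in>U. \<forall>v\<in>U. u \<noteq> v \<longrightarrow> (on_left w u (v, False) \<noteq> on_left w u (v, True) \<longleftrightarrow> adj u v))
     \<and> (\<forall>u\<in>U. \<forall>v\<in>U. nonadj adj u v \<longrightarrow> (\<forall>b. on_left w u (v, b) \<longleftrightarrow> v \<in> lft u))"

lemma conformal_model_iff_chord_model:
  assumes sd: "side_data V adj lft rgt" and "U \<subseteq> V"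
  shows "conformal_model adj lft rgt U w \<longleftrightarrow> chord_model adj lft U w"
proof (cases "distinct w \<and> set w = U \<times> UNIV")
  case True
  then have d: "distinct w" and letters: "\<And>u b. u \<in> U \<Longrightarrow> (u, b) \<in> set w" by auto
  have cross: "crosses w u v \<longleftrightarrow> on_left w u (v, False) \<noteq> on_left w u (v, True)"
    if "u \<in> U" "v \<in> U" for u v
    by (rule crosses_iff[OF d]) (use letters that in auto)
  have sides: "(v \<in> lft u \<longrightarrow> {(v, False), (v, True)} \<subseteq> left_side w u)
      \<and> (v \<in> rgt u \<longrightarrow> {(v, False), (v, True)} \<subseteq> right_side w u)
    \<longleftrightarrow> (\<forall>b. on_left w u (v, b) \<longleftrightarrow> v \<in> lft u)"
    if "u \<in> U" "v \<in> U" "nonadj adj u v" for u v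
  proof -
    have "v \<in> lft u \<union> rgt u" "lft u \<inter> rgt u = {}"
      using sd that \<open>U \<subseteq> V\<close> unfolding side_data_def by auto
    moreover have "u \<noteq> v" using that(3) unfolding nonadj_def by simp
    ultimately show ?thesis
      using left_side_iff[OF d, of u] right_side_iff[OF d, of u] letters that(1,2)
      by (auto simp: all_bool_eq)
  qed
  show ?thesis
    unfolding conformal_model_def chord_model_def
    by (simp only: True cross sides simp_thms cong: ball_cong imp_cong)
qed (auto simp: conformal_model_def chord_model_def)

lemma chord_model_distinct: "chord_model adj lft U w \<Longrightarrow> distinct w"
  unfolding chord_model_def by blast

lemma chord_model_set: "chord_model adj lft U w \<Longrightarrow> set w = U \<times> UNIV"
  unfolding chord_model_def by blast

lemma chord_model_crossing:
  "chord_model adj lft U w \<Longrightarrow> u \<in> U \<Longrightarrow> v \<in> U \<Longrightarrow> u \<noteq> v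
    \<Longrightarrow> on_left w u (v, False) \<noteq> on_left w u (v, True) \<longleftrightarrow> adj u v"
  unfolding chord_model_def by blast

lemma chord_model_side:
  "chord_model adj lft U w \<Longrightarrow> u \<in> U \<Longrightarrow> v \<in> U \<Longrightarrow> nonadj adj u v
    \<Longrightarrow> on_left w u (v, b) \<longleftrightarrow> v \<in> lft u"
  unfolding chord_model_def by blast

lemma chord_model_distinct_idx:
  assumes "chord_model adj lft U w" "distinct xs" "fst ` set xs \<subseteq> U"
  shows "distinct (map (idx w) xs)"
  by (rule distinct_map_idx) (use assms(2,3) chord_model_set[OF assms(1)] in auto)

lemma chord_model_restrict:
  assumes cm: "chord_model adj lft V w" and "U \<subseteq> V"
  shows "chord_model adj lft U (filter (\<lambda>x. fst x \<in> U) w)"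
proof -
  let ?w = "filter (\<lambda>x. fst x \<in> U) w"
  have set_w: "set ?w = U \<times> UNIV" using chord_model_set[OF cm] \<open>U \<subseteq> V\<close> by auto
  have "on_left ?w u y \<longleftrightarrow> on_left w u y" if "u \<in> U" "fst y \<in> U" for u y
    unfolding on_left_def
    by (rule cyclic_filter) (use chord_model_distinct[OF cm] set_w that in \<open>auto simp:
      mem_Times_iff\<close>)
  then show ?thesis
    using cm \<open>U \<subseteq> V\<close> set_w unfolding chord_model_def by (simp add: subset_iff)
qed

lemma on_left_reflect:
  assumes "distinct w" "set w = U \<times> UNIV" "u \<in> U" "fst y \<in> U"
  shows "on_left (reflect w) u y \<longleftrightarrow> on_left w u (flip y)"
  unfolding on_left_def using cyclic_reflect[OF assms(1), of "(u, False)" y "(u, True)"] assms(2-4)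
  by (cases y) auto

lemma chord_model_reflect:
  assumes cm: "chord_model adj lft U w"
  shows "chord_model adj lft U (reflect w)"
proof -
  have "set (reflect w) = U \<times> UNIV"
    using chord_model_set[OF cm] by (force simp: set_reflect image_iff)
  moreover have "on_left (reflect w) u (v, b) \<longleftrightarrow> on_left w u (v, \<not> b)" if "u \<in> U" "v \<in> U" for u v b
    using on_left_reflect[OF chord_model_distinct[OF cm] chord_model_set[OF cm], of u "(v, b)"] that
    by simp
  ultimately show ?thesis
    using cm distinct_reflect[OF chord_model_distinct[OF cm]] unfolding chord_model_def by auto
qed

lemma on_left_rotate:
  assumes "distinct w" "set w = U \<times> UNIV" "u \<in> U" "fst y \<in> U"
  shows "on_left (rotate n w) u y \<longleftrightarrow> on_left w u y"
  unfolding on_left_def by (rule cyclic_rotate) (use assms in \<open>auto simp: mem_Times_iff\<close>)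

text \<open>A chord crossing the chord of \<open>v\<close> separates the two ends of \<open>v\<close>; reflection exchanges
  the ends, rotation keeps them.\<close>

lemma chord_model_not_cw_equiv_reflect:
  assumes cm: "chord_model adj lft U w" and "u \<in> U" "v \<in> U" "u \<noteq> v" "adj u v"
  shows "\<not> cw_equiv w (reflect w)"
proof
  assume "cw_equiv w (reflect w)"
  then obtain n where n: "rotate n w = reflect w" unfolding cw_equiv_def by blast
  note d = chord_model_distinct[OF cm] and s = chord_model_set[OF cm]
  have "on_left w u (v, False) \<longleftrightarrow> on_left (rotate n w) u (v, False)"
    using on_left_rotate[OF d s] assms(2,3) by simp
  also have "\<dots> \<longleftrightarrow> on_left w u (v, True)"
    unfolding n using on_left_reflect[OF d s, of u "(v, False)"] assms(2,3) by simp
  finally show False using chord_model_crossing[OF cm] assms(2-5) by blast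
qed

lemma chord_model_crossing_sym:
  assumes cm: "chord_model adj lft U w" and "u \<in> U" "v \<in> U" "u \<noteq> v" "adj u v"
  shows "on_left w v (u, False) \<longleftrightarrow> \<not> on_left w u (v, False)"
proof -
  have "distinct (map (idx w) [(u, False), (u, True), (v, False), (v, True)])"
    by (rule chord_model_distinct_idx[OF cm]) (use assms in auto)
  moreover have "on_left w u (v, False) \<noteq> on_left w u (v, True)"
    using chord_model_crossing[OF cm] assms(2-5) by blast
  ultimately show ?thesis
    using cyclic3_crossing[of "idx w (u, False)" "idx w (u, True)" "idx w (v, False)"
        "idx w (v, True)"]
    unfolding on_left_def cyclic_def by simp
qed

lemma chord_model_gamma:
  assumes cm: "chord_model adj lft U m" and "u \<in> U" "v \<in> U" "w \<in> U" "distinct [u, v, w]"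
    and "adj u v" "adj u w" "\<not> adj v w" "\<not> adj w v"
  shows "on_left m u (v, False) = on_left m u (w, False)
    \<longleftrightarrow> on_left m v (w, False) \<noteq> on_left m w (v, False)"
proof -
  have "distinct (map (idx m) [(u, False), (u, True), (v, False), (v, True), (w, False),
      (w, True)])"
    by (rule chord_model_distinct_idx[OF cm]) (use assms in auto)
  moreover have "on_left m u (v, False) \<noteq> on_left m u (v, True)"
    "on_left m u (w, False) \<noteq> on_left m u (w, True)"
    using chord_model_crossing[OF cm] assms(2-7) by auto
  moreover have "on_left m v (w, False) = on_left m v (w, True)"
    "on_left m w (v, False) = on_left m w (v, True)"
    using chord_model_crossing[OF cm] assms(2-5,8,9) by auto
  ultimately show ?thesis
    using cyclic3_crossing_two[of "idx m (u, False)" "idx m (u, True)" "idx m (v, False)"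
        "idx m (v, True)" "idx m (w, False)" "idx m (w, True)"]
    unfolding on_left_def cyclic_def by simp
qed

lemma chord_model_opposite_sides:
  assumes cm: "chord_model adj lft U w"
    and "u \<in> U" "fst y \<in> U" "fst z \<in> U" "fst y \<noteq> u" "fst z \<noteq> u"
    and "on_left w u y" "\<not> on_left w u z"
  shows "cyclic w (u, False) y z \<and> cyclic w (u, True) z y"
proof -
  have "distinct (map (idx w) [(u, False), (u, True), y, z])"
    by (rule chord_model_distinct_idx[OF cm]) (use assms in auto)
  then show ?thesis
    using cyclic3_opposite_sides[of "idx w (u, False)" "idx w (u, True)" "idx w y" "idx w z"] assms(7,8)
    unfolding on_left_def cyclic_def by simp
qed

section \<open>Models with the same sides of all chords are rotations of each other\<close>

definition connected_graph :: "('v \<Rightarrow> 'v \<Rightarrow> bool) \<Rightarrow> 'v set \<Rightarrow> bool" where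
  "connected_graph adj U \<longleftrightarrow> (\<forall>s\<in>U. \<forall>v\<in>U. (\<lambda>x y. x \<in> U \<and> y \<in> U \<and> adj x y)\<^sup>*\<^sup>* s v)"

text \<open>Two such models order every triple of letters alike: directly for triples containing both
  ends of a chord, with \<open>cyclic_split\<close> for triples containing an edge, and along paths for the
  remaining ones.\<close>

context
  fixes adj :: "'v \<Rightarrow> 'v \<Rightarrow> bool" and lft :: "'v \<Rightarrow> 'v set" and U :: "'v set"
    and \<phi> \<psi> :: "'v letter list"
  assumes \<phi>: "chord_model adj lft U \<phi>" and \<psi>: "chord_model adj lft U \<psi>"
    and same_sides: "\<And>u y. u \<in> U \<Longrightarrow> fst y \<in> U \<Longrightarrow> fst y \<noteq> u \<Longrightarrow> on_left \<phi> u y \<longleftrightarrow> on_left \<psi> u y"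
begin

abbreviation agree :: "'v letter \<Rightarrow> 'v letter \<Rightarrow> 'v letter \<Rightarrow> bool" where
  "agree a b c \<equiv> (cyclic \<phi> a b c \<longleftrightarrow> cyclic \<psi> a b c)"

lemma letter_mem: "fst y \<in> U \<Longrightarrow> y \<in> set \<phi>" "fst y \<in> U \<Longrightarrow> y \<in> set \<psi>"
  using chord_model_set[OF \<phi>] chord_model_set[OF \<psi>] by (auto simp: mem_Times_iff)

lemma agree_swap:
  assumes "fst a \<in> U" "fst b \<in> U" "fst c \<in> U" "agree a b c"
  shows "agree a c b"
proof (cases "distinct [a, b, c]")
  case True
  then show ?thesis
    using cyclic_swap[OF True, of \<phi>] cyclic_swap[OF True, of \<psi>] letter_mem assms by auto
next
  case False
  then show ?thesis by (auto simp: cyclic_degenerate)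
qed

lemma agree_perm:
  assumes "fst a \<in> U" "fst b \<in> U" "fst c \<in> U" "agree a b c"
  shows "agree b c a" "agree a c b" "agree b a c" "agree c a b" "agree c b a"
proof -
  have rotate: "agree b c a" if "agree a b c" for a b c
    using that cyclic_rotate_args[of \<phi> a b c] cyclic_rotate_args[of \<psi> a b c] by simp
  show "agree b c a" using rotate assms(4) .
  show "agree c a b" using rotate[OF rotate] assms(4) .
  show swapped: "agree a c b" using agree_swap assms .
  show "agree c b a" using rotate[OF swapped] .
  show "agree b a c" using rotate[OF rotate[OF swapped]] .
qed

lemma agree_chord_ends:
  assumes "v \<in> U" "fst y \<in> U" "fst y \<noteq> v"
  shows "agree (v, b) y (v, \<not> b)"
proof -
  have "agree (v, False) y (v, True)"
    using same_sides[OF assms] unfolding on_left_def .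
  then show ?thesis
    using agree_perm(5)[of "(v, False)" y "(v, True)"] assms by (cases b) auto
qed

lemma agree_opposite_sides:
  assumes "u \<in> U" "fst y \<in> U" "fst z \<in> U" "fst y \<noteq> u" "fst z \<noteq> u"
    and "on_left \<phi> u y \<noteq> on_left \<phi> u z"
  shows "agree (u, b) y z"
proof -
  have oriented: "agree (u, b) y z"
    if "fst y \<in> U" "fst z \<in> U" "fst y \<noteq> u" "fst z \<noteq> u" "on_left \<phi> u y" "\<not> on_left \<phi> u z" for y z
  proof -
    have "on_left \<psi> u y" "\<not> on_left \<psi> u z" using same_sides assms(1) that by auto
    then have "cyclic \<psi> (u, False) y z \<and> cyclic \<psi> (u, True) z y"
      using chord_model_opposite_sides[OF \<psi> assms(1) that(1-4)] by blast
    moreover have "cyclic \<phi> (u, False) y z \<and> cyclic \<phi> (u, True) z y"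
      using chord_model_opposite_sides[OF \<phi> assms(1) that] .
    ultimately show ?thesis
      using agree_swap[of "(u, True)" z y] assms(1) that(1,2) by (cases b) auto
  qed
  show ?thesis
  proof (cases "on_left \<phi> u y")
    case True
    then show ?thesis using oriented assms by blast
  next
    case False
    then have "agree (u, b) z y" using oriented[of z y] assms by blast
    then show ?thesis using agree_swap[of "(u, b)" z y] assms by simp
  qed
qed

lemma agree_split:
  assumes "fst x \<in> U" "fst a \<in> U" "fst b \<in> U" "fst c \<in> U" "distinct [x, a, b, c]"
    and "agree x a b" "agree x b c" "agree x a c"
  shows "agree a b c"
proof -
  have "{x, a, b, c} \<subseteq> set \<phi>" "{x, a, b, c} \<subseteq> set \<psi>" using letter_mem assms(1-4) by auto
  moreover have "agree x c a" using agree_perm(2)[of x a c] assms by simp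
  ultimately show ?thesis
    using cyclic_split[OF assms(5), of \<phi>] cyclic_split[OF assms(5), of \<psi>] assms(6,7) by simp
qed

lemma agree_edge:
  assumes "u \<in> U" "v \<in> U" "w \<in> U" "distinct [u, v, w]" "adj u v"
  shows "agree (u, b1) (v, b2) (w, b3)"
proof (cases "on_left \<phi> u (v, b2) \<noteq> on_left \<phi> u (w, b3)")
  case True
  then show ?thesis by (intro agree_opposite_sides) (use assms in auto)
next
  case False
  have "u \<noteq> v" "w \<noteq> v" using assms(4) by auto
  then have "on_left \<phi> u (v, False) \<noteq> on_left \<phi> u (v, True)"
    using chord_model_crossing[OF \<phi> assms(1,2)] assms(5) by blast
  then have "on_left \<phi> u (v, \<not> b2) \<noteq> on_left \<phi> u (w, b3)" using False by (cases b2) auto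
  then have "agree (u, b1) (v, \<not> b2) (w, b3)" by (intro agree_opposite_sides) (use assms in auto)
  then have "agree (v, \<not> b2) (u, b1) (w, b3)"
    using agree_perm(3)[of "(u, b1)" "(v, \<not> b2)" "(w, b3)"] assms(1-3) by simp
  moreover have "agree (v, \<not> b2) (u, b1) (v, b2)"
    using agree_chord_ends[of v "(u, b1)" "\<not> b2"] \<open>u \<noteq> v\<close> assms(1,2) by simp
  moreover have "agree (v, \<not> b2) (w, b3) (v, b2)"
    using agree_chord_ends[of v "(w, b3)" "\<not> b2"] \<open>w \<noteq> v\<close> assms(2,3) by simp
  then have "agree (v, \<not> b2) (v, b2) (w, b3)"
    using agree_perm(2)[of "(v, \<not> b2)" "(w, b3)" "(v, b2)"] assms(2,3) by simp
  ultimately show ?thesis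
    using agree_split[of "(v, \<not> b2)" "(u, b1)" "(v, b2)" "(w, b3)"] assms by auto
qed

lemma agree_path:
  assumes "(\<lambda>x y. x \<in> U \<and> y \<in> U \<and> adj x y)\<^sup>*\<^sup>* s v"
  shows "s \<in> U \<Longrightarrow> v \<in> U \<Longrightarrow> w \<in> U \<Longrightarrow> distinct [s, v, w] \<Longrightarrow> agree (s, bs) (v, bv) (w, bw)"
  using assms
proof (induction arbitrary: bs w rule: converse_rtranclp_induct)
  case base
  then show ?case by simp
next
  case (step s z)
  have z: "z \<in> U" "adj s z" using step.hyps(1) by auto
  consider "z = s" | "z = v" | "z = w" | "distinct [z, s, v, w]" using step.prems(4) by auto
  then show ?case
  proof cases
    case 1
    then show ?thesis using step.IH[of w bs] step.prems by simp
  next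
    case 2
    then show ?thesis using agree_edge[of s v w bs bv bw] step.prems z by simp
  next
    case 3
    then have "agree (s, bs) (w, bw) (v, bv)"
      using agree_edge[of s w v bs bw bv] step.prems z by auto
    then show ?thesis using agree_swap[of "(s, bs)" "(w, bw)" "(v, bv)"] step.prems by simp
  next
    case 4
    have "agree (z, False) (v, bv) (w, bw)" using step.IH[of w False] step.prems z 4 by simp
    moreover have "agree (s, bs) (z, False) (v, bv)" "agree (s, bs) (z, False) (w, bw)"
      using agree_edge[of s z v bs False bv] agree_edge[of s z w bs False bw] step.prems z 4 by auto
    then have "agree (z, False) (s, bs) (v, bv)" "agree (z, False) (s, bs) (w, bw)"
      using agree_perm(3) step.prems z by auto
    ultimately show ?thesis
      using agree_split[of "(z, False)" "(s, bs)" "(v, bv)" "(w, bw)"] step.prems z 4 by auto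
  qed
qed

lemma agree_all:
  assumes "connected_graph adj U" "fst a \<in> U" "fst b \<in> U" "fst c \<in> U"
  shows "agree a b c"
proof -
  obtain u bu v bv w bw where abc: "a = (u, bu)" "b = (v, bv)" "c = (w, bw)" by (metis prod.exhaust)
  consider "\<not> distinct [a, b, c]" | "u = v" "distinct [a, b, c]" | "v = w" "distinct [a, b, c]"
    | "u = w" "distinct [a, b, c]" | "distinct [u, v, w]"
    using abc by fastforce
  then show ?thesis
  proof cases
    case 1
    then show ?thesis by (auto simp: cyclic_degenerate)
  next
    case 2
    then show ?thesis
      using agree_chord_ends[of u c bu] agree_perm(2)[of a c b] abc assms(2-4)
      by (cases bu; cases bv) auto
  next
    case 3
    then show ?thesis
      using agree_chord_ends[of v a bv] agree_perm(3)[of b a c] abc assms(2-4)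
      by (cases bv; cases bw) auto
  next
    case 4
    then show ?thesis
      using agree_chord_ends[of u b bu] abc assms(2-4) by (cases bu; cases bw) auto
  next
    case 5
    then show ?thesis
      using agree_path assms unfolding connected_graph_def abc by simp
  qed
qed

lemma cw_equiv_if_same_sides:
  assumes "connected_graph adj U"
  shows "cw_equiv \<psi> \<phi>"
  unfolding cw_equiv_def
proof (rule rotation_if_same_cyclic)
  show "distinct \<phi>" "distinct \<psi>" "set \<phi> = set \<psi>"
    using chord_model_distinct[OF \<phi>] chord_model_distinct[OF \<psi>] chord_model_set[OF \<phi>]
      chord_model_set[OF \<psi>]
    by auto
  show "cyclic \<phi> a b c \<longleftrightarrow> cyclic \<psi> a b c" if "a \<in> set \<phi>" "b \<in> set \<phi>" "c \<in> set \<phi>" for a b c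
    using agree_all[OF assms] that chord_model_set[OF \<phi>] by (auto simp: mem_Times_iff)
qed

end

section \<open>Gallai's relation on the edges of a prime graph\<close>

text \<open>A \<open>\<Gamma>\<close>-closed set of edges, given as a symmetric relation \<open>X\<close>, is a union of
  \<open>\<Gamma>\<close>-classes.\<close>

definition gamma_closed :: "('v \<Rightarrow> 'v \<Rightarrow> bool) \<Rightarrow> 'v set \<Rightarrow> ('v \<Rightarrow> 'v \<Rightarrow> bool) \<Rightarrow> bool" where
  "gamma_closed adj U X \<longleftrightarrow> (\<forall>u v. X u v \<longrightarrow> u \<in> U \<and> v \<in> U \<and> adj u v) \<and> (\<forall>u v. X u v \<longrightarrow> X v u)
     \<and> (\<forall>u\<in>U. \<forall>v\<in>U. \<forall>w\<in>U. adj u v \<longrightarrow> adj u w \<longrightarrow> v \<noteq> w \<longrightarrow> \<not> adj v w \<longrightarrow> (X u v \<longleftrightarrow> X u w))"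

lemma gamma_closedD:
  assumes "gamma_closed adj U X"
  shows "X u v \<Longrightarrow> u \<in> U \<and> v \<in> U \<and> adj u v" and "X u v \<Longrightarrow> X v u"
    and "u \<in> U \<Longrightarrow> v \<in> U \<Longrightarrow> w \<in> U \<Longrightarrow> adj u v \<Longrightarrow> adj u w \<Longrightarrow> v \<noteq> w \<Longrightarrow> \<not> adj v w
      \<Longrightarrow> X u v \<longleftrightarrow> X u w"
  using assms unfolding gamma_closed_def by blast+

context
  fixes adj :: "'v \<Rightarrow> 'v \<Rightarrow> bool" and U :: "'v set"
  assumes simple: "simple_graph U adj" and prime: "prime_graph adj U"
begin

lemma adj_irrefl: "u \<in> U \<Longrightarrow> \<not> adj u u"
  using simple unfolding simple_graph_def by blast

lemma adj_sym: "u \<in> U \<Longrightarrow> v \<in> U \<Longrightarrow> adj u v \<longleftrightarrow> adj v u"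
  using simple unfolding simple_graph_def by blast

text \<open>The vertices reachable from \<open>x\<^sub>0\<close> by \<open>X\<close>-edges form a module: a vertex outside adjacent to
  exactly one end of an \<open>X\<close>-edge would be joined to it by an \<open>X\<close>-edge. The module contains the
  two ends of an edge, so it is everything.\<close>

lemma gamma_closed_reaches_all:
  assumes X: "gamma_closed adj U X" and "X x\<^sub>0 y\<^sub>0" and "y \<in> U"
  shows "X\<^sup>*\<^sup>* x\<^sub>0 y"
proof -
  define K where "K = {y. X\<^sup>*\<^sup>* x\<^sub>0 y}"
  note X_edge = gamma_closedD(1)[OF X] and X_sym = gamma_closedD(2)[OF X]
    and X_gamma = gamma_closedD(3)[OF X]
  have K_step: "k \<in> K \<Longrightarrow> X k k' \<Longrightarrow> k' \<in> K" for k k'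
    unfolding K_def by (simp add: rtranclp.rtrancl_into_rtrancl)
  have "x\<^sub>0 \<in> U" using X_edge \<open>X x\<^sub>0 y\<^sub>0\<close> by blast
  have "K \<subseteq> U"
  proof
    fix y assume "y \<in> K"
    then have "X\<^sup>*\<^sup>* x\<^sub>0 y" unfolding K_def by simp
    then show "y \<in> U" by (induction rule: rtranclp_induct) (use \<open>x\<^sub>0 \<in> U\<close> X_edge in auto)
  qed
  have across_edge: "adj x k \<longleftrightarrow> adj x k'" if "x \<in> U" "x \<notin> K" "k \<in> K" "X k k'" for x k k'
  proof -
    have "k' \<in> K" "k \<in> U" "k' \<in> U" "adj k k'" using K_step X_edge that by auto
    moreover have "k \<noteq> x" "k' \<noteq> x" using that \<open>k' \<in> K\<close> by auto
    ultimately show ?thesis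
      using X_gamma[of k k' x] X_gamma[of k' k x] X_sym K_step adj_sym that by blast
  qed
  have "adj x k \<longleftrightarrow> adj x x\<^sub>0" if "x \<in> U" "x \<notin> K" "k \<in> K" for x k
  proof -
    have "X\<^sup>*\<^sup>* x\<^sub>0 k" using \<open>k \<in> K\<close> unfolding K_def by simp
    then show ?thesis
    proof (induction rule: rtranclp_induct)
      case (step k k')
      then have "k \<in> K" unfolding K_def by simp
      then show ?case using across_edge[OF that(1,2) _ step.hyps(2)] step.IH by simp
    qed simp
  qed
  then have "is_module adj U K" unfolding is_module_def using \<open>K \<subseteq> U\<close> by blast
  then have "card K \<le> 1 \<or> K = U" using prime unfolding prime_graph_def by blast
  moreover have "{x\<^sub>0, y\<^sub>0} \<subseteq> K" "x\<^sub>0 \<noteq> y\<^sub>0" using \<open>X x\<^sub>0 y\<^sub>0\<close> X_edge adj_irrefl unfolding K_def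
    by auto
  moreover have "finite K" using \<open>K \<subseteq> U\<close> simple finite_subset unfolding simple_graph_def by blast
  ultimately have "K = U" using card_mono[of K "{x\<^sub>0, y\<^sub>0}"] by auto
  then show ?thesis using \<open>y \<in> U\<close> unfolding K_def by blast
qed

text \<open>The \<open>X\<close>-edges between neighbours of \<open>c\<close> that are not \<open>X\<close>-joined to \<open>c\<close> form a
  \<open>\<Gamma>\<close>-closed set, which would have to reach \<open>c\<close> itself.\<close>

lemma gamma_closed_no_triangle:
  assumes X: "gamma_closed adj U X" and "c \<in> U" and "X p q" "adj c p" "adj c q" "\<not> X c p" "\<not> X c q"
  shows False
proof -
  note X_edge = gamma_closedD(1)[OF X] and X_sym = gamma_closedD(2)[OF X]
    and X_gamma = gamma_closedD(3)[OF X]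
  define Z where "Z u v \<longleftrightarrow> X u v \<and> adj c u \<and> adj c v \<and> \<not> X c u \<and> \<not> X c v" for u v
  have Z_gamma: "Z u w" if "u \<in> U" "v \<in> U" "w \<in> U" "adj u v" "adj u w" "v \<noteq> w" "\<not> adj v w" "Z u v"
    for u v w
  proof -
    have "X u v" "adj c u" "adj c v" "\<not> X c u" "\<not> X c v" using \<open>Z u v\<close> unfolding Z_def by auto
    then have "X u w" using X_gamma that by blast
    then have "c \<noteq> w" using \<open>\<not> X c u\<close> X_sym by blast
    have "adj c w"
    proof (rule ccontr)
      assume "\<not> adj c w"
      then have "X u c \<longleftrightarrow> X u w"
        using X_gamma[of u c w] that \<open>c \<in> U\<close> \<open>adj c u\<close> adj_sym \<open>c \<noteq> w\<close> by blast
      then show False using \<open>X u w\<close> \<open>\<not> X c u\<close> X_sym by blast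
    qed
    then have "\<not> X c w" using X_gamma[of c v w] that \<open>c \<in> U\<close> \<open>adj c v\<close> \<open>\<not> X c v\<close> by blast
    then show ?thesis unfolding Z_def using \<open>X u w\<close> \<open>adj c u\<close> \<open>adj c w\<close> \<open>\<not> X c u\<close> by blast
  qed
  have "Z u v \<Longrightarrow> u \<in> U \<and> v \<in> U \<and> adj u v" "Z u v \<Longrightarrow> Z v u" for u v
    using X_edge X_sym unfolding Z_def by blast+
  moreover have "Z u v \<longleftrightarrow> Z u w"
    if "u \<in> U" "v \<in> U" "w \<in> U" "adj u v" "adj u w" "v \<noteq> w" "\<not> adj v w" for u v w
    using Z_gamma[OF that] Z_gamma[of u w v] that adj_sym by blast
  ultimately have "gamma_closed adj U Z" unfolding gamma_closed_def by blast
  moreover have "Z p q" unfolding Z_def using assms(3-7) by blast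
  ultimately have "Z\<^sup>*\<^sup>* p c" using gamma_closed_reaches_all \<open>c \<in> U\<close> by blast
  moreover have "p \<noteq> c" using \<open>adj c p\<close> adj_irrefl \<open>c \<in> U\<close> by blast
  ultimately obtain y where "Z y c" by (metis rtranclp.cases)
  then show False unfolding Z_def using adj_irrefl \<open>c \<in> U\<close> by blast
qed

text \<open>If both \<open>X\<close> and its complement \<open>Y\<close> among the edges are non-empty, an \<open>X\<close>-edge \<open>ce\<close> and a
  \<open>Y\<close>-edge \<open>cd\<close> meet; then \<open>de\<close> is an edge, and either choice for it gives a forbidden triangle.\<close>

lemma gamma_closed_all_or_none:
  assumes X: "gamma_closed adj U X"
  shows "(\<forall>u\<in>U. \<forall>v\<in>U. adj u v \<longrightarrow> X u v) \<or> (\<forall>u v. \<not> X u v)"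
proof (rule ccontr)
  assume "\<not> ?thesis"
  then obtain a b c d where "X a b" and cd: "c \<in> U" "d \<in> U" "adj c d" "\<not> X c d" by blast
  note X_edge = gamma_closedD(1)[OF X] and X_sym = gamma_closedD(2)[OF X]
    and X_gamma = gamma_closedD(3)[OF X]
  define Y where "Y u v \<longleftrightarrow> u \<in> U \<and> v \<in> U \<and> adj u v \<and> \<not> X u v" for u v
  have Y: "gamma_closed adj U Y"
    using X_sym X_gamma adj_sym unfolding gamma_closed_def Y_def by blast
  have "X\<^sup>*\<^sup>* a c" using gamma_closed_reaches_all[OF X \<open>X a b\<close> \<open>c \<in> U\<close>] .
  then obtain e where "X c e"
    using \<open>X a b\<close> X_sym by (metis rtranclp.cases)
  then have e: "e \<in> U" "adj c e" "e \<noteq> d" using X_edge cd by auto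
  have "adj e d"
  proof (rule ccontr)
    assume "\<not> adj e d"
    then have "X c e \<longleftrightarrow> X c d" using X_gamma cd e by blast
    then show False using \<open>X c e\<close> cd by blast
  qed
  show False
  proof (cases "X e d")
    case True
    show False
      by (rule gamma_closed_no_triangle[OF Y \<open>e \<in> U\<close>, of c d])
        (use cd e \<open>adj e d\<close> True \<open>X c e\<close> X_sym adj_sym in \<open>auto simp: Y_def\<close>)
  next
    case False
    show False
      by (rule gamma_closed_no_triangle[OF X \<open>d \<in> U\<close>, of c e])
        (use cd e \<open>adj e d\<close> False \<open>X c e\<close> X_sym adj_sym in auto)
  qed
qed

lemma prime_graph_has_edge:
  assumes "3 \<le> card U"
  shows "\<exists>u\<in>U. \<exists>v\<in>U. adj u v"
proof (rule ccontr)
  assume no_edge: "\<not> ?thesis"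
  obtain T where T: "T \<subseteq> U" "card T = 2" using obtain_subset_with_card_n[of 2 U] assms by auto
  then have "is_module adj U T" unfolding is_module_def using no_edge by blast
  then show False using prime T assms unfolding prime_graph_def by auto
qed

lemma prime_graph_connected:
  assumes "3 \<le> card U"
  shows "connected_graph adj U"
proof -
  let ?E = "\<lambda>x y. x \<in> U \<and> y \<in> U \<and> adj x y"
  obtain a b where "?E a b" using prime_graph_has_edge assms by blast
  moreover have "gamma_closed adj U ?E" unfolding gamma_closed_def using adj_sym by blast
  ultimately have from_a: "?E\<^sup>*\<^sup>* a y" if "y \<in> U" for y using gamma_closed_reaches_all that by blast
  have "?E\<^sup>*\<^sup>* y a" if "y \<in> U" for y
    using from_a[OF that] by induction (use adj_sym in \<open>auto intro:
      converse_rtranclp_into_rtranclp\<close>)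
  then show ?thesis unfolding connected_graph_def using from_a by (meson rtranclp_trans)
qed

end

section \<open>Uniqueness of the conformal model of a prime graph\<close>

lemma same_sides_if_same_on_edges:
  assumes \<phi>: "chord_model adj lft U \<phi>" and \<psi>: "chord_model adj lft U \<psi>"
    and edges: "\<And>u v. u \<in> U \<Longrightarrow> v \<in> U \<Longrightarrow> u \<noteq> v \<Longrightarrow> adj u v
      \<Longrightarrow> on_left \<phi> u (v, False) \<longleftrightarrow> on_left \<psi> u (v, False)"
    and "u \<in> U" "fst y \<in> U" "fst y \<noteq> u"
  shows "on_left \<phi> u y \<longleftrightarrow> on_left \<psi> u y"
proof -
  obtain v b where y: "y = (v, b)" by fastforce
  then have v: "v \<in> U" "u \<noteq> v" using assms(5,6) by auto
  show ?thesis
  proof (cases "adj u v")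
    case True
    then show ?thesis
      using edges[OF assms(4) v True] chord_model_crossing[OF \<phi> assms(4) v]
        chord_model_crossing[OF \<psi> assms(4) v] y
      by (cases b) auto
  next
    case False
    then have "nonadj adj u v" using v unfolding nonadj_def by simp
    then show ?thesis
      using chord_model_side[OF \<phi> assms(4) v(1)] chord_model_side[OF \<psi> assms(4) v(1)] y by simp
  qed
qed

lemma chord_models_disagreement_gamma_closed:
  assumes simple: "simple_graph U adj"
    and \<phi>: "chord_model adj lft U \<phi>" and \<psi>: "chord_model adj lft U \<psi>"
  shows "gamma_closed adj U
    (\<lambda>u v. u \<in> U \<and> v \<in> U \<and> adj u v \<and> on_left \<phi> u (v, False) \<noteq> on_left \<psi> u (v, False))"
    (is "gamma_closed adj U ?X")
proof -
  have irrefl: "\<And>u. u \<in> U \<Longrightarrow> \<not> adj u u" and sym: "\<And>u v. u \<in> U \<Longrightarrow> v \<in> U \<Longrightarrow> adj u v \<longleftrightarrow> adj v u"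
    using simple unfolding simple_graph_def by blast+
  have "?X v u" if "?X u v" for u v
  proof -
    have uv: "u \<in> U" "v \<in> U" "u \<noteq> v" "adj u v" using that irrefl by auto
    then have "on_left \<phi> v (u, False) \<longleftrightarrow> \<not> on_left \<phi> u (v, False)"
      "on_left \<psi> v (u, False) \<longleftrightarrow> \<not> on_left \<psi> u (v, False)"
      using chord_model_crossing_sym[OF \<phi>] chord_model_crossing_sym[OF \<psi>] by blast+
    then show ?thesis using that uv sym[of u v] by simp
  qed
  moreover have "?X u v \<longleftrightarrow> ?X u w"
    if "u \<in> U" "v \<in> U" "w \<in> U" "adj u v" "adj u w" "v \<noteq> w" "\<not> adj v w" for u v w
  proof -
    have uvw: "distinct [u, v, w]" "\<not> adj w v" using that irrefl sym by auto
    then have "nonadj adj v w" "nonadj adj w v" using that unfolding nonadj_def by auto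
    then have "on_left \<phi> v (w, False) \<longleftrightarrow> on_left \<psi> v (w, False)"
      "on_left \<phi> w (v, False) \<longleftrightarrow> on_left \<psi> w (v, False)"
      using chord_model_side[OF \<phi>] chord_model_side[OF \<psi>] that(2,3) by blast+
    then show ?thesis
      using chord_model_gamma[OF \<phi> that(1-3) uvw(1) that(4,5,7) uvw(2)]
        chord_model_gamma[OF \<psi> that(1-3) uvw(1) that(4,5,7) uvw(2)] that by auto
  qed
  ultimately show ?thesis unfolding gamma_closed_def by blast
qed

lemma chord_model_unique_up_to_reflection:
  assumes "simple_graph U adj" "prime_graph adj U" "3 \<le> card U"
    and \<phi>: "chord_model adj lft U \<phi>" and \<psi>: "chord_model adj lft U \<psi>"
  shows "cw_equiv \<psi> \<phi> \<or> cw_equiv \<psi> (reflect \<phi>)"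
proof -
  have connected: "connected_graph adj U" using prime_graph_connected assms(1-3) .
  have \<phi>': "chord_model adj lft U (reflect \<phi>)" using \<phi> by (rule chord_model_reflect)
  consider "\<forall>u\<in>U. \<forall>v\<in>U. adj u v \<longrightarrow> on_left \<phi> u (v, False) \<noteq> on_left \<psi> u (v, False)"
    | "\<forall>u\<in>U. \<forall>v\<in>U. adj u v \<longrightarrow> on_left \<phi> u (v, False) = on_left \<psi> u (v, False)"
    using gamma_closed_all_or_none[OF assms(1,2)
        chord_models_disagreement_gamma_closed[OF assms(1) \<phi> \<psi>]]
    by blast
  then show ?thesis
  proof cases
    case 1
    have "on_left (reflect \<phi>) u (v, False) \<longleftrightarrow> on_left \<psi> u (v, False)"
      if "u \<in> U" "v \<in> U" "u \<noteq> v" "adj u v" for u v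
      using 1 that chord_model_crossing[OF \<phi> that(1-3)]
        on_left_reflect[OF chord_model_distinct[OF \<phi>] chord_model_set[OF \<phi>], of u "(v, False)"]
      by auto
    then have "cw_equiv \<psi> (reflect \<phi>)"
      using cw_equiv_if_same_sides[OF \<phi>' \<psi> _ connected] same_sides_if_same_on_edges[OF \<phi>' \<psi>]
      by blast
    then show ?thesis ..
  next
    case 2
    then have "cw_equiv \<psi> \<phi>"
      using cw_equiv_if_same_sides[OF \<phi> \<psi> _ connected] same_sides_if_same_on_edges[OF \<phi> \<psi>] by blast
    then show ?thesis ..
  qed
qed

lemma simple_graph_subset: "simple_graph V adj \<Longrightarrow> U \<subseteq> V \<Longrightarrow> simple_graph U adj"
  unfolding simple_graph_def by (meson finite_subset subsetD)

lemma md_child_disjoint: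
  assumes "md_child adj V Q M\<^sub>1" "md_child adj V Q M\<^sub>2" "M\<^sub>1 \<noteq> M\<^sub>2"
  shows "M\<^sub>1 \<inter> M\<^sub>2 = {}"
proof -
  have "strong_module adj V M\<^sub>1" "strong_module adj V M\<^sub>2" "M\<^sub>1 \<subset> Q" "M\<^sub>2 \<subset> Q"
    using assms(1,2) unfolding md_child_def by auto
  then have "M\<^sub>1 \<inter> M\<^sub>2 = {} \<or> M\<^sub>1 \<subseteq> M\<^sub>2 \<or> M\<^sub>2 \<subseteq> M\<^sub>1" unfolding strong_module_def by blast
  then show ?thesis
    using assms \<open>strong_module adj V M\<^sub>1\<close> \<open>strong_module adj V M\<^sub>2\<close> \<open>M\<^sub>1 \<subset> Q\<close> \<open>M\<^sub>2 \<subset> Q\<close>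
    unfolding md_child_def by blast
qed

lemma prime_node_card_representatives:
  assumes "prime_node adj V Q" "representatives adj V Q U" "finite U"
  shows "3 \<le> card U"
proof -
  let ?C = "{M. md_child adj V Q M}" and ?rep = "\<lambda>M. the_elem (U \<inter> M)"
  have rep: "U \<inter> M = {?rep M}" if "M \<in> ?C" for M
  proof -
    have "card (U \<inter> M) = 1" using assms(2) that unfolding representatives_def by blast
    then obtain x where "U \<inter> M = {x}" by (rule card_1_singletonE)
    then show ?thesis by simp
  qed
  have "inj_on ?rep ?C"
  proof (rule inj_onI)
    fix M\<^sub>1 M\<^sub>2 assume "M\<^sub>1 \<in> ?C" "M\<^sub>2 \<in> ?C" "?rep M\<^sub>1 = ?rep M\<^sub>2"
    then have "M\<^sub>1 \<inter> M\<^sub>2 \<noteq> {}" using rep by (metis disjoint_iff insertI1 IntD2)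
    then show "M\<^sub>1 = M\<^sub>2" using md_child_disjoint \<open>M\<^sub>1 \<in> ?C\<close> \<open>M\<^sub>2 \<in> ?C\<close> by blast
  qed
  moreover have "?rep ` ?C \<subseteq> U" using rep by blast
  ultimately have "card ?C \<le> card U" using card_inj_on_le assms(3) by blast
  then show ?thesis using assms(1) unfolding prime_node_def by linarith
qed

theorem mainTheorem1:
  fixes V :: "'v set" and adj :: "'v \<Rightarrow> 'v \<Rightarrow> bool"
    and lft rgt :: "'v \<Rightarrow> 'v set" and Q U :: "'v set"
  assumes "simple_graph V adj"
    and "side_data V adj lft rgt"
    and "\<exists>\<phi>. conformal_model adj lft rgt V \<phi>"
    and "prime_node adj V Q"
    and "representatives adj V Q U"
  shows "prime_graph adj U \<and>
    (\<exists>\<phi>. conformal_model adj lft rgt U \<phi> \<and> conformal_model adj lft rgt U (reflect \<phi>)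
        \<and> \<not> cw_equiv \<phi> (reflect \<phi>)
        \<and> (\<forall>\<psi>. conformal_model adj lft rgt U \<psi> \<longrightarrow> cw_equiv \<psi> \<phi> \<or> cw_equiv \<psi> (reflect \<phi>)))"
proof -
  have "U \<subseteq> V"
    using assms(4,5) unfolding prime_node_def representatives_def strong_module_def is_module_def
    by blast
  have simple: "simple_graph U adj" using simple_graph_subset assms(1) \<open>U \<subseteq> V\<close> .
  have prime: "prime_graph adj U" using assms(4,5) unfolding prime_node_def by blast
  have card: "3 \<le> card U"
    using prime_node_card_representatives assms(4,5) simple unfolding simple_graph_def by blast
  note models = conformal_model_iff_chord_model[OF assms(2) \<open>U \<subseteq> V\<close>]
  obtain \<Phi> where "conformal_model adj lft rgt V \<Phi>" using assms(3) by blast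
  then have "chord_model adj lft V \<Phi>" using conformal_model_iff_chord_model[OF assms(2)] by blast
  then have \<phi>: "chord_model adj lft U (filter (\<lambda>x. fst x \<in> U) \<Phi>)" (is "chord_model _ _ _ ?\<phi>")
    using chord_model_restrict \<open>U \<subseteq> V\<close> by blast
  obtain u v where "u \<in> U" "v \<in> U" "adj u v" using prime_graph_has_edge simple prime card by blast
  moreover have "u \<noteq> v" using \<open>adj u v\<close> \<open>u \<in> U\<close> simple unfolding simple_graph_def by blast
  ultimately have "\<not> cw_equiv ?\<phi> (reflect ?\<phi>)" using chord_model_not_cw_equiv_reflect[OF \<phi>] by blast
  then show ?thesis
    using prime \<phi> chord_model_reflect[OF \<phi>]
      chord_model_unique_up_to_reflection[OF simple prime card \<phi>]
    unfolding models by blast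
qed

end
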